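(* Let $q=q_n$ be the transpose top with random measure on $S_n$ and $u=u_n$ the uniform measure on $S_n$. For any sequence of nonnegative integers $(k_n)$ such that $(k_n-n\log n)/n\to-\infty$ as $n\to\infty$, we have $d_2(q^{(k_n)},u)\to\infty$ and $\|q^{(k_n)}-u\|_{TV}\to 1$ as $n\to\infty$.
   Context: The transpose top with random measure on $S_n$ is $q(\tau)=1/n$ if $\tau=(1,j)$, $1\le j\le n$ (with $(1,1)=e$), and $0$ otherwise. $q^{(k)}$ is the $k$-fold convolution power. $d_2(p,u)=\big(|G|\sum_{x\in G}|p(x)-u(x)|^2\big)^{1/2}$ and $\|p-u\|_{TV}=\sup_{A\subset G}(p(A)-u(A))$. *)

theory Defs
  imports "HOL-Analysis.Analysis" "HOL-Combinatorics.Transposition" "HOL-Combinatorics.Permutations"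
begin

text \<open>The symmetric group S_n, realised as the permutations of {1..n}.
  Probability measures on S_n are functions (nat => nat) => real, only their values on S_n matter.\<close>

definition Sym :: "nat \<Rightarrow> (nat \<Rightarrow> nat) set" where
  "Sym n = {p. p permutes {1..n}}"

definition ttr :: "nat \<Rightarrow> (nat \<Rightarrow> nat) \<Rightarrow> real" where
  "ttr n \<tau> = (if \<exists>j\<in>{1..n}. \<tau> = Transposition.transpose 1 j then 1 / real n else 0)"

definition unif :: "nat \<Rightarrow> (nat \<Rightarrow> nat) \<Rightarrow> real" where
  "unif n x = (if x \<in> Sym n then 1 / real (card (Sym n)) else 0)"

definition conv :: "nat \<Rightarrow> ((nat \<Rightarrow> nat) \<Rightarrow> real) \<Rightarrow> ((nat \<Rightarrow> nat) \<Rightarrow> real) \<Rightarrow> (nat \<Rightarrow> nat) \<Rightarrow> real" where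
  "conv n p r x = (\<Sum>y\<in>Sym n. p (x \<circ> inv y) * r y)"

fun conv_pow :: "nat \<Rightarrow> ((nat \<Rightarrow> nat) \<Rightarrow> real) \<Rightarrow> nat \<Rightarrow> (nat \<Rightarrow> nat) \<Rightarrow> real" where
  "conv_pow n p 0 = (\<lambda>x. if x = id then 1 else 0)"
| "conv_pow n p (Suc k) = conv n (conv_pow n p k) p"

definition d2 :: "nat \<Rightarrow> ((nat \<Rightarrow> nat) \<Rightarrow> real) \<Rightarrow> ((nat \<Rightarrow> nat) \<Rightarrow> real) \<Rightarrow> real" where
  "d2 n p u = sqrt (real (card (Sym n)) * (\<Sum>x\<in>Sym n. \<bar>p x - u x\<bar>^2))"

definition tv :: "nat \<Rightarrow> ((nat \<Rightarrow> nat) \<Rightarrow> real) \<Rightarrow> ((nat \<Rightarrow> nat) \<Rightarrow> real) \<Rightarrow> real" where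
  "tv n p u = (SUP A\<in>Pow (Sym n). (\<Sum>x\<in>A. p x) - (\<Sum>x\<in>A. u x))"

end

theory Submission
  imports Defs
begin

(* A step of the walk multiplies on the right by the transposition (1 j) for a
   uniform j in {1..n}, so q^(k)(x) is the fraction of the n^k words
   j_1 ... j_k with (1 j_1) ... (1 j_k) = x.  A card j >= 2 that never occurs in
   the word is a fixed point of the product.  The number N of such untouched
   cards has mean mu = (n-1)((n-1)/n)^k and variance at most mu (first and
   second moment computation over words), so by Chebyshev N >= mu/2 except on
   a fraction 4/mu of the words.  Hence the set A of permutations with at least
   mu/2 fixed points has q^(k)(A) >= 1 - 4/mu, whereas a uniform permutation has
   one fixed point on average and Markov gives u(A) <= 2/mu.  The set A alone
   witnesses ||q^(k) - u||_TV >= 1 - 6/mu and, by Cauchy-Schwarz on A,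
   d_2(q^(k),u) >= sqrt(mu/8).  Finally k_n - n log n = -c_n n with c_n -> oo
   forces mu >= e^(c_n - 3) -> oo. *)

section \<open>Words and the transpose top with random walk\<close>

text \<open>Words of length k over the alphabet {1..n}; the walk after k steps is the
  image of the uniform distribution on such words under the product map.\<close>
definition words :: "nat \<Rightarrow> nat \<Rightarrow> nat list set" where
  "words n k = {xs. set xs \<subseteq> {1..n} \<and> length xs = k}"

fun word_prod :: "nat list \<Rightarrow> nat \<Rightarrow> nat" where
  "word_prod [] = id"
| "word_prod (j # js) = word_prod js \<circ> Transposition.transpose 1 j"

lemma finite_words: "finite (words n k)"
  unfolding words_def by (rule finite_lists_length_eq) simp

lemma card_words: "card (words n k) = n ^ k"
  unfolding words_def by (subst card_lists_length_eq) auto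

lemma sum_words_Suc:
  "(\<Sum>xs\<in>words n (Suc k). f xs) = (\<Sum>j\<in>{1..n}. \<Sum>xs\<in>words n k. f (j # xs))"
proof -
  have eq: "words n (Suc k) = (\<lambda>(xs, j). j # xs) ` (words n k \<times> {1..n})"
    unfolding words_def by (rule lists_length_Suc_eq)
  have inj: "inj_on (\<lambda>(xs, j::nat). j # xs) (words n k \<times> {1..n})"
    by (auto simp: inj_on_def)
  have "(\<Sum>xs\<in>words n (Suc k). f xs) = (\<Sum>(xs, j)\<in>words n k \<times> {1..n}. f (j # xs))"
    unfolding eq by (subst sum.reindex[OF inj]) (simp add: case_prod_unfold)
  also have "\<dots> = (\<Sum>j\<in>{1..n}. \<Sum>xs\<in>words n k. f (j # xs))"
    by (subst sum.cartesian_product[symmetric]) (rule sum.swap)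
  finally show ?thesis .
qed

lemma sum_words_avoiding:
  assumes "B \<subseteq> {1..n}"
  shows "(\<Sum>xs\<in>words n k. of_bool (set xs \<inter> B = {})) = real (n - card B) ^ k"
proof -
  have "words n k \<inter> {xs. set xs \<inter> B = {}} = {xs. set xs \<subseteq> {1..n} - B \<and> length xs = k}"
    unfolding words_def by auto
  moreover have "card ({1..n} - B) = n - card B"
    using assms by (simp add: card_Diff_subset finite_subset)
  ultimately show ?thesis
    by (simp add: finite_words card_lists_length_eq)
qed

lemma finite_Sym: "finite (Sym n)"
  unfolding Sym_def by (rule finite_permutations) simp

lemma card_Sym: "card (Sym n) = fact n"
  unfolding Sym_def by (rule card_permutations) simp_all

lemma word_prod_Sym: "set xs \<subseteq> {1..n} \<Longrightarrow> 1 \<le> n \<Longrightarrow> word_prod xs \<in> Sym n"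
  by (induction xs) (auto simp: Sym_def permutes_id intro!: permutes_compose permutes_swap_id)

lemma word_prod_fixes: "j \<notin> set xs \<Longrightarrow> j \<noteq> 1 \<Longrightarrow> word_prod xs j = j"
  by (induction xs) auto

lemma conv_ttr:
  assumes "n \<ge> 1"
  shows "conv n p (ttr n) x = (\<Sum>j\<in>{1..n}. p (x \<circ> Transposition.transpose 1 j)) / real n"
proof -
  let ?t = "Transposition.transpose (1::nat)"
  have sub: "?t ` {1..n} \<subseteq> Sym n"
    by (auto simp: Sym_def intro!: permutes_swap_id)
  have inj: "inj_on ?t {1..n}"
    by (rule inj_onI) (metis transpose_apply_first)
  have "conv n p (ttr n) x = (\<Sum>y\<in>?t ` {1..n}. p (x \<circ> inv y) * ttr n y)"
    unfolding conv_def
    by (rule sum.mono_neutral_right[OF finite_Sym sub]) (auto simp: ttr_def)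
  also have "\<dots> = (\<Sum>j\<in>{1..n}. p (x \<circ> inv (?t j)) * ttr n (?t j))"
    by (subst sum.reindex[OF inj]) simp
  also have "\<dots> = (\<Sum>j\<in>{1..n}. p (x \<circ> ?t j) / real n)"
    by (intro sum.cong refl) (auto simp: ttr_def)
  finally show ?thesis by (simp add: sum_divide_distrib)
qed

lemma conv_pow_ttr:
  assumes "n \<ge> 1"
  shows "conv_pow n (ttr n) k x = (\<Sum>xs\<in>words n k. of_bool (word_prod xs = x)) / real n ^ k"
proof (induction k arbitrary: x)
  case 0
  have "words n 0 = {[]}" unfolding words_def by auto
  then show ?case by (simp add: id_def eq_commute[of x])
next
  case (Suc k)
  have shift: "(w = (\<lambda>a. x (Transposition.transpose i j a))) = (w \<circ> Transposition.transpose i j = x)"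
    for w :: "nat \<Rightarrow> nat" and i j :: nat
    by (auto simp: fun_eq_iff) (metis transpose_involutory)+
  have "conv_pow n (ttr n) (Suc k) x
      = (\<Sum>j\<in>{1..n}. \<Sum>xs\<in>words n k. of_bool (word_prod (j # xs) = x)) / real n ^ Suc k"
    by (simp add: conv_ttr[OF assms] Suc.IH shift sum_divide_distrib field_simps)
  then show ?case by (simp only: sum_words_Suc)
qed

section \<open>Untouched cards and their moments\<close>

definition untouched :: "nat \<Rightarrow> nat list \<Rightarrow> nat" where
  "untouched n xs = card ({2..n} - set xs)"

lemma untouched_as_sum: "real (untouched n xs) = (\<Sum>j\<in>{2..n}. of_bool (j \<notin> set xs))"
proof -
  have "{2..n} - set xs = {2..n} \<inter> {j. j \<notin> set xs}" by auto
  then show ?thesis unfolding untouched_def by simp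
qed

text \<open>The expected number of untouched cards: each of the n-1 cards j >= 2 is
  missed by a uniform word with probability ((n-1)/n)^k.\<close>
definition mean_untouched :: "nat \<Rightarrow> nat \<Rightarrow> real" where
  "mean_untouched n k = real (n - 1) ^ Suc k / real n ^ k"

lemma sum_untouched:
  assumes "n \<ge> 1"
  shows "(\<Sum>xs\<in>words n k. real (untouched n xs)) = mean_untouched n k * real n ^ k"
proof -
  have "(\<Sum>xs\<in>words n k. real (untouched n xs))
      = (\<Sum>j\<in>{2..n}. \<Sum>xs\<in>words n k. of_bool (set xs \<inter> {j} = {}))"
    unfolding untouched_as_sum by (subst sum.swap) simp
  also have "\<dots> = (\<Sum>j\<in>{2..n}. real (n - 1) ^ k)"
    by (intro sum.cong refl) (subst sum_words_avoiding; auto)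
  also have "\<dots> = real (n - 1) ^ Suc k"
    using assms by (simp add: of_nat_diff)
  finally show ?thesis
    using assms by (simp add: mean_untouched_def)
qed

text \<open>Second moment, obtained by counting words avoiding one or two given cards.\<close>
lemma sum_untouched_sq:
  assumes "n \<ge> 2"
  shows "(\<Sum>xs\<in>words n k. real (untouched n xs) ^ 2)
       = real (n - 1) * (real (n - 1) ^ k + real (n - 2) ^ Suc k)"
proof -
  have pair: "(\<Sum>xs\<in>words n k. of_bool (set xs \<inter> {i, j} = {}))
            = (if j = i then real (n - 1) ^ k else real (n - 2) ^ k)"
    if "i \<in> {2..n}" "j \<in> {2..n}" for i j
    using that sum_words_avoiding[of "{i, j}" n k] by (auto simp: card_insert_if)
  have row: "(\<Sum>j\<in>{2..n}. if j = i then real (n - 1) ^ k else real (n - 2) ^ k)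
           = real (n - 1) ^ k + real (n - 2) ^ Suc k" if "i \<in> {2..n}" for i
  proof -
    have "{2..n} \<inter> - {i} = {2..n} - {i}" by auto
    then show ?thesis
      using that assms by (simp add: sum.If_cases Int_absorb1 of_nat_diff)
  qed
  have "(\<Sum>xs\<in>words n k. real (untouched n xs) ^ 2)
      = (\<Sum>i\<in>{2..n}. \<Sum>j\<in>{2..n}. \<Sum>xs\<in>words n k. of_bool (set xs \<inter> {i, j} = {}))"
    unfolding untouched_as_sum power2_eq_square sum_product
    by (subst sum.swap, rule sum.cong[OF refl], subst sum.swap) (auto intro!: sum.cong)
  also have "\<dots> = (\<Sum>i\<in>{2..n}. \<Sum>j\<in>{2..n}. if j = i then real (n - 1) ^ k else real (n - 2) ^ k)"
    using pair by (intro sum.cong refl) blast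
  also have "\<dots> = (\<Sum>i\<in>{2..n}. real (n - 1) ^ k + real (n - 2) ^ Suc k)"
    by (intro sum.cong refl row)
  also have "\<dots> = real (n - 1) * (real (n - 1) ^ k + real (n - 2) ^ Suc k)"
    using assms by (simp add: of_nat_diff)
  finally show ?thesis .
qed

text \<open>The algebraic heart of the variance bound: with a = n - 1,
  a (a-1)^(k+1) (a+1)^k <= a^(2k+2), since (a-1)(a+1) <= a^2.\<close>
lemma power_product_le:
  fixes a :: real
  assumes "a \<ge> 1"
  shows "a * (a - 1) ^ Suc k * (a + 1) ^ k \<le> (a ^ Suc k) ^ 2"
proof -
  have "((a - 1) * (a + 1)) ^ k \<le> (a ^ 2) ^ k"
    using assms mult_mono[OF assms assms]
    by (intro power_mono) (auto simp: algebra_simps power2_eq_square)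
  moreover have "a * (a - 1) \<le> a ^ 2"
    using assms by (simp add: power2_eq_square algebra_simps)
  ultimately have le: "(a * (a - 1)) * ((a - 1) * (a + 1)) ^ k \<le> a ^ 2 * (a ^ 2) ^ k"
    using assms by (intro mult_mono) auto
  have lhs: "a * (a - 1) ^ Suc k * (a + 1) ^ k = (a * (a - 1)) * ((a - 1) * (a + 1)) ^ k"
    by (simp add: power_mult_distrib mult_ac)
  have rhs: "(a ^ Suc k) ^ 2 = a ^ 2 * (a ^ 2) ^ k"
    by (metis power_mult mult.commute power_Suc)
  show ?thesis unfolding lhs rhs by (rule le)
qed

lemma sum_untouched_sq_le:
  fixes n k :: nat
  assumes "n \<ge> 2"
  defines "\<mu> \<equiv> mean_untouched n k"
  shows "(\<Sum>xs\<in>words n k. real (untouched n xs) ^ 2) \<le> (\<mu> + \<mu> ^ 2) * real n ^ k"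
proof -
  define a where "a = real (n - 1)"
  have a1: "a \<ge> 1" and n_eq: "real n = a + 1" and n2_eq: "real (n - 2) = a - 1"
    using assms(1) by (auto simp: a_def of_nat_diff)
  have a1_pos: "a + 1 > 0" and D: "(a + 1) ^ k > 0" using a1 by simp_all
  have \<mu>_eq: "\<mu> = a ^ Suc k / (a + 1) ^ k"
    by (simp add: \<mu>_def mean_untouched_def a_def n_eq)
  have "a * (a - 1) ^ Suc k \<le> (a ^ Suc k) ^ 2 / (a + 1) ^ k"
    using power_product_le[OF a1, of k] D by (simp add: pos_le_divide_eq)
  also have "\<dots> = \<mu> ^ 2 * real n ^ k"
    using D by (simp add: \<mu>_eq n_eq power2_eq_square)
  finally have "a * (a - 1) ^ Suc k \<le> \<mu> ^ 2 * real n ^ k" .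
  moreover have "a * a ^ k = \<mu> * real n ^ k"
    using a1_pos by (simp add: \<mu>_eq n_eq)
  ultimately show ?thesis
    unfolding sum_untouched_sq[OF assms(1)] by (simp add: a_def n2_eq algebra_simps)
qed

section \<open>Chebyshev and Markov for counting measures\<close>

lemma chebyshev_count:
  fixes f :: "'a \<Rightarrow> real" and m :: real
  assumes "m > 0"
    and mean: "(\<Sum>x\<in>S. f x) = m * real (card S)"
    and second: "(\<Sum>x\<in>S. f x ^ 2) \<le> (m + m ^ 2) * real (card S)"
  shows "(\<Sum>x\<in>S. of_bool (f x < m / 2)) \<le> 4 / m * real (card S)"
proof -
  have pointwise: "of_bool (f x < m / 2) * (m / 2) ^ 2 \<le> (f x - m) ^ 2" for x
  proof (cases "f x < m / 2")
    case True
    then have "(m / 2) ^ 2 \<le> (m - f x) ^ 2"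
      using assms(1) by (intro power_mono) auto
    then show ?thesis using True by (simp add: power2_commute)
  qed simp
  have "(\<Sum>x\<in>S. of_bool (f x < m / 2)) * (m / 2) ^ 2 \<le> (\<Sum>x\<in>S. (f x - m) ^ 2)"
    unfolding sum_distrib_right by (intro sum_mono pointwise)
  also have "\<dots> = (\<Sum>x\<in>S. f x ^ 2 - 2 * m * f x + m ^ 2)"
    by (rule sum.cong) (simp_all add: power2_diff algebra_simps)
  also have "\<dots> = (\<Sum>x\<in>S. f x ^ 2) - 2 * m * (\<Sum>x\<in>S. f x) + m ^ 2 * real (card S)"
    by (simp add: sum.distrib sum_subtractf sum_distrib_left)
  also have "\<dots> \<le> m * real (card S)"
    using mean second by (simp add: power2_eq_square algebra_simps)
  finally show ?thesis
    using assms(1) by (simp add: field_simps power2_eq_square)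
qed

lemma markov_count:
  fixes f :: "'a \<Rightarrow> real"
  assumes "\<And>x. x \<in> S \<Longrightarrow> f x \<ge> 0" "c > 0"
  shows "(\<Sum>x\<in>S. of_bool (c \<le> f x)) \<le> (\<Sum>x\<in>S. f x) / c"
proof -
  have "(\<Sum>x\<in>S. of_bool (c \<le> f x)) * c \<le> (\<Sum>x\<in>S. f x)"
    unfolding sum_distrib_right by (intro sum_mono) (use assms(1) in auto)
  then show ?thesis using assms(2) by (simp add: pos_le_divide_eq)
qed

section \<open>Fixed points of a uniform permutation\<close>

definition fixed_points :: "nat \<Rightarrow> (nat \<Rightarrow> nat) \<Rightarrow> nat" where
  "fixed_points n \<sigma> = card {j \<in> {1..n}. \<sigma> j = j}"

text \<open>The permutations of {1..n} fixing j are exactly the permutations of {1..n} - {j}.\<close>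
lemma card_Sym_fixing:
  assumes "j \<in> {1..n}"
  shows "card {\<sigma> \<in> Sym n. \<sigma> j = j} = fact (n - 1)"
proof -
  have "{\<sigma> \<in> Sym n. \<sigma> j = j} = {\<sigma>. \<sigma> permutes ({1..n} - {j})}"
    unfolding Sym_def
    by (auto simp: permutes_def intro: permutes_subset[of _ "{1..n} - {j}"])
  then show ?thesis
    using assms by (simp add: card_permutations)
qed

lemma sum_fixed_points:
  assumes "n \<ge> 1"
  shows "(\<Sum>\<sigma>\<in>Sym n. real (fixed_points n \<sigma>)) = fact n"
proof -
  have count: "real (fixed_points n \<sigma>) = (\<Sum>j\<in>{1..n}. of_bool (\<sigma> j = j))" for \<sigma>
  proof -
    have "{j \<in> {1..n}. \<sigma> j = j} = {1..n} \<inter> {j. \<sigma> j = j}" by auto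
    then show ?thesis unfolding fixed_points_def by simp
  qed
  have fixing: "(\<Sum>\<sigma>\<in>Sym n. of_bool (\<sigma> j = j)) = real (fact (n - 1))" if "j \<in> {1..n}" for j
  proof -
    have "Sym n \<inter> {\<sigma>. \<sigma> j = j} = {\<sigma> \<in> Sym n. \<sigma> j = j}" by auto
    then show ?thesis using card_Sym_fixing[OF that] finite_Sym by simp
  qed
  have "(\<Sum>\<sigma>\<in>Sym n. real (fixed_points n \<sigma>)) = (\<Sum>j\<in>{1..n}. real (fact (n - 1)))"
    unfolding count by (subst sum.swap) (intro sum.cong refl fixing)
  also have "\<dots> = fact n"
    using assms by (simp add: fact_reduce)
  finally show ?thesis .
qed

lemma conv_pow_ttr_mass:
  assumes "n \<ge> 1" "finite A"
  shows "(\<Sum>\<sigma>\<in>A. conv_pow n (ttr n) k \<sigma>)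
       = (\<Sum>xs\<in>words n k. of_bool (word_prod xs \<in> A)) / real n ^ k"
proof -
  have "(\<Sum>\<sigma>\<in>A. of_bool (word_prod xs = \<sigma>)) = (of_bool (word_prod xs \<in> A) :: real)" for xs
    using assms(2) by (simp add: of_bool_def)
  then show ?thesis
    unfolding conv_pow_ttr[OF assms(1)] sum_divide_distrib[symmetric]
    by (subst sum.swap) simp
qed

lemma conv_pow_ttr_mass_le_1:
  assumes "n \<ge> 1" "finite A"
  shows "(\<Sum>\<sigma>\<in>A. conv_pow n (ttr n) k \<sigma>) \<le> 1"
proof -
  have "(\<Sum>xs\<in>words n k. of_bool (word_prod xs \<in> A)) \<le> (\<Sum>xs\<in>words n k. 1::real)"
    by (intro sum_mono) simp
  then show ?thesis
    using assms by (simp add: conv_pow_ttr_mass card_words)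
qed

lemma unif_mass:
  assumes "A \<subseteq> Sym n"
  shows "(\<Sum>\<sigma>\<in>A. unif n \<sigma>) = real (card A) / fact n"
  using assms by (simp add: unif_def card_Sym subset_eq)

lemma tv_ge_set:
  assumes "A \<subseteq> Sym n"
  shows "(\<Sum>x\<in>A. p x) - (\<Sum>x\<in>A. u x) \<le> tv n p u"
  unfolding tv_def
  by (rule cSUP_upper2[where x = A]) (use assms finite_Sym in \<open>auto intro: bdd_above_finite\<close>)

lemma tv_le_1:
  assumes "\<And>B. B \<subseteq> Sym n \<Longrightarrow> (\<Sum>x\<in>B. p x) \<le> 1" and "\<And>x. u x \<ge> 0"
  shows "tv n p u \<le> 1"
  unfolding tv_def
proof (rule cSUP_least)
  fix B assume "B \<in> Pow (Sym n)"
  then show "(\<Sum>x\<in>B. p x) - (\<Sum>x\<in>B. u x) \<le> 1"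
    using assms(1)[of B] sum_nonneg[of B u] assms(2) by auto
qed auto

text \<open>Cauchy-Schwarz on A: a discrepancy delta concentrated on a small set A
  forces d2^2 >= |G| delta^2 / |A|.\<close>
lemma d2_ge_set:
  assumes "A \<subseteq> Sym n" "A \<noteq> {}"
  shows "sqrt (real (card (Sym n)) * ((\<Sum>x\<in>A. p x) - (\<Sum>x\<in>A. u x)) ^ 2 / real (card A))
       \<le> d2 n p u"
proof -
  have cA: "real (card A) > 0"
    using assms finite_Sym finite_subset by (auto simp: card_gt_0_iff)
  have "((\<Sum>x\<in>A. p x) - (\<Sum>x\<in>A. u x)) ^ 2 \<le> (\<Sum>x\<in>A. (p x - u x) ^ 2) * card A"
    unfolding sum_subtractf[symmetric] by (rule sum_squared_le_sum_of_squares)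
  also have "\<dots> \<le> (\<Sum>x\<in>Sym n. (p x - u x) ^ 2) * card A"
    by (intro mult_right_mono sum_mono2 finite_Sym assms(1)) auto
  finally show ?thesis
    unfolding d2_def power2_abs using cA
    by (intro real_sqrt_le_mono) (simp add: divide_le_eq mult_left_mono mult.assoc)
qed

text \<open>The test set: permutations with at least mu/2 fixed points.  The walk puts
  mass at least 1 - 4/mu on it (Chebyshev on the untouched cards).\<close>
lemma walk_mass_many_fixed_points:
  fixes n k :: nat
  assumes "n \<ge> 2"
  defines "\<mu> \<equiv> mean_untouched n k"
  assumes "\<mu> > 0"
  shows "1 - 4 / \<mu> \<le> (\<Sum>\<sigma>\<in>{\<sigma> \<in> Sym n. \<mu> / 2 \<le> real (fixed_points n \<sigma>)}. conv_pow n (ttr n) k \<sigma>)"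
proof -
  let ?A = "{\<sigma> \<in> Sym n. \<mu> / 2 \<le> real (fixed_points n \<sigma>)}"
  let ?N = "\<lambda>xs. real (untouched n xs)"
  have N_le: "?N xs \<le> real (fixed_points n (word_prod xs))" for xs
    unfolding untouched_def fixed_points_def
    by (intro of_nat_mono card_mono) (auto simp: word_prod_fixes)
  have hit: "of_bool (\<mu> / 2 \<le> ?N xs) \<le> (of_bool (word_prod xs \<in> ?A) :: real)"
    if "xs \<in> words n k" for xs
    using that N_le[of xs] word_prod_Sym[of xs n] assms(1) by (auto simp: words_def)
  have mean: "(\<Sum>xs\<in>words n k. ?N xs) = \<mu> * real (card (words n k))"
    using sum_untouched assms(1) by (simp add: card_words \<mu>_def)
  have second: "(\<Sum>xs\<in>words n k. ?N xs ^ 2) \<le> (\<mu> + \<mu> ^ 2) * real (card (words n k))"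
    using sum_untouched_sq_le[OF assms(1)] by (simp add: card_words \<mu>_def)
  have bad: "(\<Sum>xs\<in>words n k. of_bool (?N xs < \<mu> / 2)) \<le> 4 / \<mu> * real n ^ k"
    using chebyshev_count[OF \<open>\<mu> > 0\<close> mean second] by (simp add: card_words)
  have "(\<Sum>xs\<in>words n k. of_bool (\<mu> / 2 \<le> ?N xs))
      = (\<Sum>xs\<in>words n k. 1 - of_bool (?N xs < \<mu> / 2) :: real)"
    by (intro sum.cong refl) auto
  then have "real n ^ k - 4 / \<mu> * real n ^ k \<le> (\<Sum>xs\<in>words n k. of_bool (\<mu> / 2 \<le> ?N xs))"
    using bad by (simp add: sum_subtractf card_words)
  also have "\<dots> \<le> (\<Sum>xs\<in>words n k. of_bool (word_prod xs \<in> ?A))"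
    by (intro sum_mono hit)
  finally show ?thesis
    using assms(1) finite_Sym
    by (subst conv_pow_ttr_mass) (auto simp: field_simps)
qed

text \<open>Few permutations have many fixed points: at most n!/c have c or more
  (Markov), so the uniform measure gives the test set mass at most 2/mu.\<close>
lemma unif_mass_many_fixed_points:
  assumes "n \<ge> 1" "c > 0"
  shows "real (card {\<sigma> \<in> Sym n. c \<le> real (fixed_points n \<sigma>)}) \<le> fact n / c"
proof -
  have "real (card {\<sigma> \<in> Sym n. c \<le> real (fixed_points n \<sigma>)})
      = (\<Sum>\<sigma>\<in>Sym n. of_bool (c \<le> real (fixed_points n \<sigma>)))"
    by (simp add: finite_Sym Collect_conj_eq)
  also have "\<dots> \<le> fact n / c"
    using markov_count[of "Sym n" "\<lambda>\<sigma>. real (fixed_points n \<sigma>)" c] assms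
    by (simp add: sum_fixed_points)
  finally show ?thesis .
qed

lemma tv_conv_pow_le_1:
  assumes "n \<ge> 1"
  shows "tv n (conv_pow n (ttr n) k) (unif n) \<le> 1"
  using assms finite_Sym
  by (intro tv_le_1 conv_pow_ttr_mass_le_1) (auto simp: unif_def intro: finite_subset)

lemma distance_lower_bounds:
  fixes n k :: nat
  assumes "n \<ge> 2"
  defines "\<mu> \<equiv> mean_untouched n k"
  assumes "\<mu> \<ge> 12"
  shows "1 - 6 / \<mu> \<le> tv n (conv_pow n (ttr n) k) (unif n)"
    and "sqrt (\<mu> / 8) \<le> d2 n (conv_pow n (ttr n) k) (unif n)"
proof -
  let ?P = "conv_pow n (ttr n) k"
  define A where "A = {\<sigma> \<in> Sym n. \<mu> / 2 \<le> real (fixed_points n \<sigma>)}"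
  define \<delta> where "\<delta> = (\<Sum>x\<in>A. ?P x) - (\<Sum>x\<in>A. unif n x)"
  have \<mu>_pos: "\<mu> > 0" using assms(3) by simp
  have AS: "A \<subseteq> Sym n" unfolding A_def by auto
  have cA: "real (card A) \<le> fact n / (\<mu> / 2)"
    unfolding A_def using assms(1) \<mu>_pos by (intro unif_mass_many_fixed_points) auto
  have unif_le: "(\<Sum>x\<in>A. unif n x) \<le> 2 / \<mu>"
    using cA \<mu>_pos by (simp add: unif_mass[OF AS] field_simps)
  have walk_ge: "1 - 4 / \<mu> \<le> (\<Sum>x\<in>A. ?P x)"
    unfolding A_def \<mu>_def
    by (rule walk_mass_many_fixed_points[OF assms(1)]) (use \<mu>_pos in \<open>simp add: \<mu>_def\<close>)
  have "6 / \<mu> = 4 / \<mu> + 2 / \<mu>" by simp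
  then have \<delta>_ge: "1 - 6 / \<mu> \<le> \<delta>"
    using unif_le walk_ge unfolding \<delta>_def by linarith
  then show "1 - 6 / \<mu> \<le> tv n ?P (unif n)"
    using tv_ge_set[OF AS, of ?P "unif n"] unfolding \<delta>_def by linarith
  have \<delta>_half: "1 / 2 \<le> \<delta>"
  proof -
    have "6 / \<mu> \<le> 1 / 2" using assms(3) by (simp add: field_simps)
    then show ?thesis using \<delta>_ge by linarith
  qed
  then have "A \<noteq> {}" unfolding \<delta>_def by auto
  then have cA_pos: "real (card A) > 0"
    using AS finite_Sym finite_subset by (auto simp: card_gt_0_iff)
  have "\<mu> / 8 \<le> fact n * (1 / 2) ^ 2 / real (card A)"
    using cA cA_pos \<mu>_pos by (simp add: field_simps)
  also have "\<dots> \<le> real (card (Sym n)) * \<delta> ^ 2 / real (card A)"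
    using \<delta>_half cA_pos by (intro divide_right_mono mult_left_mono power_mono) (auto simp: card_Sym)
  finally show "sqrt (\<mu> / 8) \<le> d2 n ?P (unif n)"
    using d2_ge_set[OF AS \<open>A \<noteq> {}\<close>, of ?P "unif n"] unfolding \<delta>_def
    by (meson order_trans real_sqrt_le_mono)
qed

section \<open>Growth of the mean before the cutoff\<close>

text \<open>For k <= n log n, mu = (n-1)(1 - 1/n)^k >= exp (log n - k/n - 3); this uses
  log (1 - x) >= -x - 2x^2 for 0 <= x <= 1/2.\<close>
lemma mean_untouched_lower:
  assumes n2: "n \<ge> 2" and k_le: "real k \<le> real n * ln (real n)"
  shows "exp (- ((real k - real n * ln (real n)) / real n) - 3) \<le> mean_untouched n k"
proof -
  define x where "x = 1 / real n"
  have npos: "real n > 0" and n2r: "real n \<ge> 2" using n2 by auto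
  have x0: "0 \<le> x" and xh: "x \<le> 1 / 2" unfolding x_def using n2r by auto
  have m1pos: "real n - 1 > 0" using n2r by simp
  have \<mu>_eq: "mean_untouched n k = (real n - 1) * (1 - x) ^ k"
    unfolding mean_untouched_def x_def using n2 npos
    by (simp add: of_nat_diff power_divide field_simps)
  have ln_\<mu>: "ln (mean_untouched n k) = ln (real n - 1) + real k * ln (1 - x)"
    unfolding \<mu>_eq using m1pos xh by (simp add: ln_mult ln_realpow)
  have step_loss: "real k * (- x - 2 * x ^ 2) \<le> real k * ln (1 - x)"
    by (intro mult_left_mono ln_one_minus_pos_lower_bound x0 xh) simp
  have quadratic_small: "real k * x ^ 2 \<le> 1"
  proof -
    have "real k * x ^ 2 \<le> (real n * ln (real n)) * x ^ 2"
      by (intro mult_right_mono k_le) simp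
    also have "\<dots> = ln (real n) / real n"
      unfolding x_def using npos by (simp add: power2_eq_square)
    also have "\<dots> \<le> 1"
      using ln_le_minus_one[OF npos] npos by (simp add: pos_divide_le_eq)
    finally show ?thesis .
  qed
  have ln_n1: "ln (real n) - 1 \<le> ln (real n - 1)"
  proof -
    have "ln (real n / 2) \<le> ln (real n - 1)"
      using npos n2r by (subst ln_le_cancel_iff) auto
    then show ?thesis
      using npos ln_2_less_1 by (simp add: ln_div)
  qed
  have "- ((real k - real n * ln (real n)) / real n) - 3 = ln (real n) - real k * x - 3"
    unfolding x_def using npos by (simp add: field_simps)
  also have "\<dots> \<le> ln (mean_untouched n k)"
    unfolding ln_\<mu> using step_loss quadratic_small ln_n1 by (simp add: algebra_simps)
  finally have "- ((real k - real n * ln (real n)) / real n) - 3 \<le> ln (mean_untouched n k)" .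
  then show ?thesis
    using m1pos \<mu>_eq xh by (subst (asm) exp_le_cancel_iff[symmetric]) simp
qed

lemma mean_untouched_tendsto:
  fixes k :: "nat \<Rightarrow> nat"
  assumes "filterlim (\<lambda>n. (real (k n) - real n * ln (real n)) / real n) at_bot sequentially"
  shows "filterlim (\<lambda>n. mean_untouched n (k n)) at_top sequentially"
  unfolding filterlim_at_top
proof
  fix Z :: real
  have "\<forall>\<^sub>F n in sequentially. (real (k n) - real n * ln (real n)) / real n \<le> - (\<bar>Z\<bar> + 3) \<and> n \<ge> 2"
    using assms unfolding filterlim_at_bot by (intro eventually_conj eventually_ge_at_top) blast
  then show "\<forall>\<^sub>F n in sequentially. Z \<le> mean_untouched n (k n)"
  proof (rule eventually_mono)
    fix n assume h: "(real (k n) - real n * ln (real n)) / real n \<le> - (\<bar>Z\<bar> + 3) \<and> n \<ge> 2"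
    then have "(real (k n) - real n * ln (real n)) / real n \<le> 0"
      using abs_ge_zero[of Z] by linarith
    then have "real (k n) \<le> real n * ln (real n)"
      using h by (simp add: divide_le_0_iff)
    then have "exp (- ((real (k n) - real n * ln (real n)) / real n) - 3) \<le> mean_untouched n (k n)"
      using h by (intro mean_untouched_lower) auto
    moreover have "Z \<le> exp \<bar>Z\<bar>"
      using exp_ge_add_one_self[of "\<bar>Z\<bar>"] by linarith
    moreover have "exp \<bar>Z\<bar> \<le> exp (- ((real (k n) - real n * ln (real n)) / real n) - 3)"
      using h by simp
    ultimately show "Z \<le> mean_untouched n (k n)" by linarith
  qed
qed

theorem proposition3p2:
  fixes k :: "nat \<Rightarrow> nat"
  assumes "filterlim (\<lambda>n. (real (k n) - real n * ln (real n)) / real n) at_bot sequentially"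
  shows "filterlim (\<lambda>n. d2 n (conv_pow n (ttr n) (k n)) (unif n)) at_top sequentially \<and>
         (\<lambda>n. tv n (conv_pow n (ttr n) (k n)) (unif n)) \<longlonglongrightarrow> 1"
proof
  define \<mu> where "\<mu> n = mean_untouched n (k n)" for n
  let ?tv = "\<lambda>n. tv n (conv_pow n (ttr n) (k n)) (unif n)"
  let ?d2 = "\<lambda>n. d2 n (conv_pow n (ttr n) (k n)) (unif n)"
  have \<mu>_top: "filterlim \<mu> at_top sequentially"
    unfolding \<mu>_def by (rule mean_untouched_tendsto[OF assms])
  have "\<forall>\<^sub>F n in sequentially. 12 \<le> \<mu> n \<and> n \<ge> 2"
    using \<mu>_top unfolding filterlim_at_top by (intro eventually_conj eventually_ge_at_top) blast
  then have bounds: "\<forall>\<^sub>F n in sequentially. 1 - 6 / \<mu> n \<le> ?tv n \<and> ?tv n \<le> 1 \<and> sqrt (\<mu> n / 8) \<le> ?d2 n"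
    by (rule eventually_mono) (simp add: \<mu>_def distance_lower_bounds tv_conv_pow_le_1)
  have "filterlim (\<lambda>n. \<mu> n * (1 / 8)) at_top sequentially"
    by (rule filterlim_at_top_mult_tendsto_pos[OF tendsto_const _ \<mu>_top]) simp
  then have "filterlim (\<lambda>n. sqrt (\<mu> n / 8)) at_top sequentially"
    by (intro filterlim_compose[OF sqrt_at_top]) simp
  then show "filterlim ?d2 at_top sequentially"
    by (rule filterlim_at_top_mono) (use bounds in \<open>rule eventually_mono; blast\<close>)
  have lower: "(\<lambda>n. 1 - 6 / \<mu> n) \<longlonglongrightarrow> 1"
    using tendsto_diff[OF tendsto_const tendsto_mult[OF tendsto_const tendsto_inverse_0_at_top[OF \<mu>_top]],
        of 1 6]
    by (simp add: divide_inverse)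
  show "?tv \<longlonglongrightarrow> 1"
    using bounds by (intro tendsto_sandwich[OF _ _ lower tendsto_const]) (auto elim: eventually_mono)
qed

end
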